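(* In the two-asset bid-ask model described in the context, let $\delta^b_t=S^b_t/S^b_{t-1}$ and $\delta^a_t=S^a_t/S^a_{t-1}$. If for all $t=1,\dots,T$ and all $c>0$, $$\mathbb{P}(\delta^b_t\le c\,|\,\mathcal{F}_{t-1})\,\mathbb{P}(\delta^a_t\ge c\,|\,\mathcal{F}_{t-1})>0\quad\text{a.s.},$$ then (NA2) holds.
   Context: $(\Omega,\mathcal{F},(\mathcal{F}_t)_{t=0,\dots,T},\mathbb{P})$ filtered complete probability space, $\mathcal{F}_0$ trivial. $d=2$. For each $t$, $S^b_t,S^a_t$ are $\mathcal{F}_t$-measurable random variables with $0<S^b_t\le S^a_t$ a.s., and the solvency cone is $\mathbf{K}_t=\{x\in\mathbb{R}^2:\ x_1+y\,x_2\ge0\ \text{for all }y\in[S^b_t,S^a_t]\}$. $L^0(\Gamma,\mathcal{F}_t)$: $\mathcal{F}_t$-measurable random vectors a.s. in $\Gamma$. $\mathsf{A}_{t,T}=\sum_{u=t}^TL^0(-\mathbf{K}_u,\mathcal{F}_u)$. (NA2): for every $t$ and $\eta_t\in L^0(\mathbb{R}^2,\mathcal{F}_t)$, if $(\eta_t+\mathsf{A}_{t,T})\cap L^0(\mathbf{K}_T,\mathcal{F}_T)\neq\emptyset$ then $\eta_t\in L^0(\mathbf{K}_t,\mathcal{F}_t)$. *)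

theory Defs
  imports "HOL-Probability.Probability"
begin

definition solvency_cone :: "(nat \<Rightarrow> 'a \<Rightarrow> real) \<Rightarrow> (nat \<Rightarrow> 'a \<Rightarrow> real) \<Rightarrow> nat \<Rightarrow> 'a \<Rightarrow> (real \<times> real) set" where
  "solvency_cone Sb Sa t w = {x. \<forall>y\<in>{Sb t w..Sa t w}. fst x + y * snd x \<ge> 0}"

definition L0 :: "'a measure \<Rightarrow> 'a measure \<Rightarrow> ('a \<Rightarrow> (real \<times> real) set) \<Rightarrow> ('a \<Rightarrow> real \<times> real) set" where
  "L0 M Fu G = {X. X \<in> borel_measurable Fu \<and> (AE w in M. X w \<in> G w)}"

definition A_set :: "'a measure \<Rightarrow> (nat \<Rightarrow> 'a measure) \<Rightarrow> (nat \<Rightarrow> 'a \<Rightarrow> real) \<Rightarrow> (nat \<Rightarrow> 'a \<Rightarrow> real)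
    \<Rightarrow> nat \<Rightarrow> nat \<Rightarrow> ('a \<Rightarrow> real \<times> real) set" where
  "A_set M F Sb Sa t T = {X. \<exists>\<xi> :: nat \<Rightarrow> 'a \<Rightarrow> real \<times> real.
      (\<forall>u\<in>{t..T}. \<xi> u \<in> L0 M (F u) (\<lambda>w. uminus ` solvency_cone Sb Sa u w))
      \<and> X = (\<lambda>w. \<Sum>u=t..T. \<xi> u w)}"

definition NA2 :: "'a measure \<Rightarrow> (nat \<Rightarrow> 'a measure) \<Rightarrow> (nat \<Rightarrow> 'a \<Rightarrow> real) \<Rightarrow> (nat \<Rightarrow> 'a \<Rightarrow> real)
    \<Rightarrow> nat \<Rightarrow> bool" where
  "NA2 M F Sb Sa T \<longleftrightarrow> (\<forall>t\<le>T. \<forall>\<eta>. \<eta> \<in> borel_measurable (F t) \<longrightarrow>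
      (\<exists>X\<in>A_set M F Sb Sa t T. (\<lambda>w. \<eta> w + X w) \<in> L0 M (F T) (solvency_cone Sb Sa T))
      \<longrightarrow> \<eta> \<in> L0 M (F t) (solvency_cone Sb Sa t))"

end

theory Submission
  imports Defs
begin

text \<open>A position \<open>(x\<^sub>1, x\<^sub>2)\<close> (cash, stock) is solvent at time \<open>t\<close> iff
  \<open>x\<^sub>1 + Sb t \<cdot> x\<^sub>2 \<ge> 0\<close> and \<open>x\<^sub>1 + Sa t \<cdot> x\<^sub>2 \<ge> 0\<close>. By backward induction over the
  trades it suffices to show that an \<open>F t\<close>-measurable position which is solvent at time \<open>t + 1\<close> is
  solvent at time \<open>t\<close>. Conditionally on \<open>F t\<close>, the bid can fall and the ask can rise by an
  arbitrarily large factor with positive probability; a position that is short in cash or in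
  stock is therefore insolvent at time \<open>t + 1\<close> on an event of positive conditional probability.
  Hence it is long in both, and so solvent at any positive prices.\<close>

lemma (in prob_space) AE_not_mem_of_cond_exp_indicator_nonzero:
  assumes G: "subalgebra M G" and A: "A \<in> sets M" and B: "B \<in> sets G"
    and disjoint: "AE w in M. w \<in> B \<longrightarrow> w \<notin> A"
    and nonzero: "AE w in M. real_cond_exp M G (indicator A) w \<noteq> 0"
  shows "AE w in M. w \<notin> B"
proof -
  interpret finite_measure_subalgebra M G
    by unfold_locales (rule G)
  let ?E = "real_cond_exp M G (indicator A)"
  have B_M: "B \<in> sets M"
    using B G by (auto simp: subalgebra_def)
  have int: "integrable M (indicator A :: _ \<Rightarrow> real)"
    using A by (simp add: integrable_indicator_iff less_top[symmetric])
  have "(\<integral>w. indicator B w * ?E w \<partial>M) = (\<integral>w. indicator B w * indicator A w \<partial>M)"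
    using real_cond_exp_intA[OF int B] by (simp add: set_lebesgue_integral_def)
  also have "\<dots> = 0"
    by (rule integral_eq_zero_AE) (use disjoint in \<open>auto simp: indicator_def\<close>)
  finally have "(\<integral>w. indicator B w * ?E w \<partial>M) = 0" .
  moreover have "integrable M (\<lambda>w. indicator B w * ?E w)"
    using integrable_mult_indicator[OF B_M real_cond_exp_int(1)[OF int]] by simp
  moreover have "AE w in M. 0 \<le> ?E w"
    by (rule real_cond_exp_pos) (use A in auto)
  then have "AE w in M. 0 \<le> indicator B w * ?E w"
    by eventually_elim (auto simp: indicator_def)
  ultimately have "AE w in M. indicator B w * ?E w = 0"
    using integral_nonneg_eq_0_iff_AE by blast
  then show ?thesis
    using nonzero by eventually_elim (auto simp: indicator_def split: if_splits)
qed

lemma obtain_pos_rat_sum_neg: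
  fixes x y :: real
  assumes "x < 0" "0 < y"
  obtains q :: rat where "0 < real_of_rat q" "x + real_of_rat q * y < 0"
proof -
  obtain r where r: "r \<in> \<rat>" "0 < r" "r < - x / y"
    using Rats_dense_in_real[of 0 "- x / y"] assms by (auto simp: field_simps)
  then obtain q where "r = real_of_rat q"
    by (auto elim: Rats_cases)
  moreover have "x + r * y < 0"
    using r(3) assms by (simp add: field_simps)
  ultimately show thesis
    using r(2) that by blast
qed

text \<open>If \<open>x < 0 < y\<close> on an event \<open>B \<in> G\<close>, then for rational \<open>c < -x/y\<close> the event
  \<open>{R \<le> c}\<close> is disjoint from \<open>B\<close> up to a null set, which forces \<open>B\<close> to be null.\<close>
lemma (in prob_space) AE_nonneg_of_conditionally_small_ratio:
  fixes x y R :: "'a \<Rightarrow> real"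
  assumes G: "subalgebra M G"
    and x[measurable]: "x \<in> borel_measurable G" and y[measurable]: "y \<in> borel_measurable G"
    and A_sets: "\<And>c. 0 < c \<Longrightarrow> A c \<in> sets M"
    and A_nonzero: "\<And>c. 0 < c \<Longrightarrow> AE w in M. real_cond_exp M G (indicator (A c)) w \<noteq> 0"
    and A_small: "\<And>c. 0 < c \<Longrightarrow> AE w in M. w \<in> A c \<longrightarrow> R w \<le> c"
    and bound: "AE w in M. 0 < y w \<longrightarrow> 0 \<le> x w + R w * y w"
  shows "AE w in M. 0 < y w \<longrightarrow> 0 \<le> x w"
proof -
  have space_G: "space G = space M"
    using G by (auto simp: subalgebra_def)
  have "AE w in M. 0 < real_of_rat q \<longrightarrow> \<not> (0 < y w \<and> x w + real_of_rat q * y w < 0)" for q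
  proof (cases "0 < real_of_rat q")
    case q: True
    define B where "B = {w \<in> space G. 0 < y w \<and> x w + real_of_rat q * y w < 0}"
    have "B \<in> sets G"
      unfolding B_def by measurable
    moreover have "AE w in M. w \<in> B \<longrightarrow> w \<notin> A (real_of_rat q)"
      using bound A_small[OF q]
    proof eventually_elim
      case (elim w)
      show ?case
      proof (intro impI notI)
        assume "w \<in> B" "w \<in> A (real_of_rat q)"
        then have "0 < y w" "x w + real_of_rat q * y w < 0" "R w \<le> real_of_rat q"
          using elim by (auto simp: B_def)
        moreover from this have "R w * y w \<le> real_of_rat q * y w"
          by (simp add: mult_right_mono)
        ultimately show False
          using elim by linarith
      qed
    qed
    ultimately have "AE w in M. w \<notin> B"
      using AE_not_mem_of_cond_exp_indicator_nonzero[OF G A_sets[OF q]] A_nonzero[OF q] by blast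
    then show ?thesis
      using AE_space by eventually_elim (auto simp: B_def space_G)
  qed simp
  then have "AE w in M. \<forall>q. 0 < real_of_rat q \<longrightarrow> \<not> (0 < y w \<and> x w + real_of_rat q * y w < 0)"
    by (simp add: AE_all_countable)
  then show ?thesis
    by eventually_elim (metis obtain_pos_rat_sum_neg not_le)
qed

lemma borel_measurable_pair_components:
  fixes f :: "'a \<Rightarrow> 'b::second_countable_topology \<times> 'c::second_countable_topology"
  assumes "f \<in> borel_measurable N"
  shows "(\<lambda>w. fst (f w)) \<in> borel_measurable N" "(\<lambda>w. snd (f w)) \<in> borel_measurable N"
  using assms unfolding borel_prod[symmetric] by measurable

lemma solvency_cone_add:
  assumes "x \<in> solvency_cone Sb Sa t w" "y \<in> solvency_cone Sb Sa t w"
  shows "x + y \<in> solvency_cone Sb Sa t w"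
  unfolding solvency_cone_def
proof (intro CollectI ballI)
  fix r assume "r \<in> {Sb t w..Sa t w}"
  then have "0 \<le> fst x + r * snd x" "0 \<le> fst y + r * snd y"
    using assms by (auto simp: solvency_cone_def)
  then show "0 \<le> fst (x + y) + r * snd (x + y)"
    by (simp add: algebra_simps)
qed

lemma solvency_cone_cancel:
  assumes "x + y \<in> solvency_cone Sb Sa t w" "y \<in> uminus ` solvency_cone Sb Sa t w"
  shows "x \<in> solvency_cone Sb Sa t w"
proof -
  have "- y \<in> solvency_cone Sb Sa t w"
    using assms(2) by auto
  from solvency_cone_add[OF assms(1) this] show ?thesis
    by simp
qed

lemma solvency_cone_bounds:
  assumes "x \<in> solvency_cone Sb Sa t w" "Sb t w \<le> Sa t w"
  shows "0 \<le> fst x + Sb t w * snd x" "0 \<le> fst x + Sa t w * snd x"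
  using assms by (auto simp: solvency_cone_def)

lemma nonneg_in_solvency_cone:
  assumes "0 \<le> Sb t w" "0 \<le> fst x" "0 \<le> snd x"
  shows "x \<in> solvency_cone Sb Sa t w"
  using assms by (auto simp: solvency_cone_def)

locale bid_ask_model = prob_space M
  for M :: "'a measure" +
  fixes F :: "nat \<Rightarrow> 'a measure" and T :: nat and Sb Sa :: "nat \<Rightarrow> 'a \<Rightarrow> real"
  assumes subalg: "\<And>t. t \<le> T \<Longrightarrow> subalgebra M (F t)"
    and filtration: "\<And>s t. s \<le> t \<Longrightarrow> t \<le> T \<Longrightarrow> sets (F s) \<subseteq> sets (F t)"
    and Sb_meas[measurable]: "\<And>t. t \<le> T \<Longrightarrow> Sb t \<in> borel_measurable (F t)"
    and Sa_meas[measurable]: "\<And>t. t \<le> T \<Longrightarrow> Sa t \<in> borel_measurable (F t)"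
    and S_pos: "\<And>t. t \<le> T \<Longrightarrow> AE w in M. 0 < Sb t w \<and> Sb t w \<le> Sa t w"
    and cond: "\<And>t c. 1 \<le> t \<Longrightarrow> t \<le> T \<Longrightarrow> 0 < c \<Longrightarrow>
      AE w in M.
        real_cond_exp M (F (t - 1)) (indicator {v \<in> space M. Sb t v / Sb (t - 1) v \<le> c}) w
      * real_cond_exp M (F (t - 1)) (indicator {v \<in> space M. Sa t v / Sa (t - 1) v \<ge> c}) w > 0"
begin

abbreviation K :: "nat \<Rightarrow> 'a \<Rightarrow> (real \<times> real) set" where
  "K \<equiv> solvency_cone Sb Sa"

lemma F_measurable_imp_measurable:
  assumes "t \<le> T" "f \<in> borel_measurable (F t)"
  shows "f \<in> borel_measurable M"
  using measurable_from_subalg[OF subalg] assms .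

lemma F_measurable_mono:
  assumes "s \<le> t" "t \<le> T" "f \<in> borel_measurable (F s)"
  shows "f \<in> borel_measurable (F t)"
proof -
  have "subalgebra (F t) (F s)"
    using subalg[of s] subalg[of t] filtration[of s t] assms by (auto simp: subalgebra_def)
  then show ?thesis
    using measurable_from_subalg assms(3) by blast
qed

context
  fixes t :: nat and \<zeta> :: "'a \<Rightarrow> real \<times> real"
  assumes t: "Suc t \<le> T" and \<zeta>[measurable]: "\<zeta> \<in> borel_measurable (F t)"
    and solvent: "AE w in M. \<zeta> w \<in> K (Suc t) w"
begin

lemma one_period_measurable[measurable]:
  "Sb t \<in> borel_measurable (F t)" "Sa t \<in> borel_measurable (F t)"
  "Sb t \<in> borel_measurable M" "Sa t \<in> borel_measurable M"
  "Sb (Suc t) \<in> borel_measurable M" "Sa (Suc t) \<in> borel_measurable M"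
  "(\<lambda>w. fst (\<zeta> w)) \<in> borel_measurable (F t)" "(\<lambda>w. snd (\<zeta> w)) \<in> borel_measurable (F t)"
  using t borel_measurable_pair_components[OF \<zeta>]
  by (auto intro: F_measurable_imp_measurable[OF _ Sb_meas] F_measurable_imp_measurable[OF _ Sa_meas])

lemma one_period_bounds:
  "AE w in M. 0 < Sb t w \<and> Sb t w \<le> Sa t w \<and> 0 < Sb (Suc t) w \<and> Sb (Suc t) w \<le> Sa (Suc t) w
    \<and> 0 \<le> fst (\<zeta> w) + Sb (Suc t) w * snd (\<zeta> w) \<and> 0 \<le> fst (\<zeta> w) + Sa (Suc t) w * snd (\<zeta> w)"
  using S_pos[of t] S_pos[OF t] solvent t by (auto elim!: AE_mp simp: solvency_cone_bounds)

lemma one_period_cond_exp_nonzero: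
  assumes "0 < c"
  shows "AE w in M. real_cond_exp M (F t) (indicator {v \<in> space M. Sb (Suc t) v / Sb t v \<le> c}) w \<noteq> 0"
    and "AE w in M. real_cond_exp M (F t) (indicator {v \<in> space M. Sa (Suc t) v / Sa t v \<ge> c}) w \<noteq> 0"
  using cond[of "Suc t" c] assms t by (auto elim: AE_mp)

lemma cash_nonneg_if_long_stock: "AE w in M. 0 < snd (\<zeta> w) \<longrightarrow> 0 \<le> fst (\<zeta> w)"
proof -
  have "AE w in M. 0 < Sb t w * snd (\<zeta> w) \<longrightarrow> 0 \<le> fst (\<zeta> w)"
  proof (rule AE_nonneg_of_conditionally_small_ratio[OF subalg[OF Suc_leD[OF t]], where R = "\<lambda>w. Sb (Suc t) w / Sb t w"
        and A = "\<lambda>c. {v \<in> space M. Sb (Suc t) v / Sb t v \<le> c}"])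
    show "AE w in M. 0 < Sb t w * snd (\<zeta> w) \<longrightarrow>
        0 \<le> fst (\<zeta> w) + Sb (Suc t) w / Sb t w * (Sb t w * snd (\<zeta> w))"
      using one_period_bounds by eventually_elim auto
  qed (use one_period_cond_exp_nonzero in auto)
  then show ?thesis
    using one_period_bounds by eventually_elim (simp add: zero_less_mult_iff)
qed

text \<open>Multiplying the ask constraint \<open>x\<^sub>1 + Sa (t + 1) \<cdot> x\<^sub>2 \<ge> 0\<close> by
  \<open>Sa t / Sa (t + 1)\<close> gives one of the same shape with the roles of cash and stock exchanged,
  and that ratio is conditionally arbitrarily small.\<close>
lemma stock_nonneg_if_long_cash: "AE w in M. 0 < fst (\<zeta> w) \<longrightarrow> 0 \<le> snd (\<zeta> w)"
proof -
  have "AE w in M. 0 < fst (\<zeta> w) \<longrightarrow> 0 \<le> Sa t w * snd (\<zeta> w)"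
  proof (rule AE_nonneg_of_conditionally_small_ratio[OF subalg[OF Suc_leD[OF t]], where R = "\<lambda>w. Sa t w / Sa (Suc t) w"
        and A = "\<lambda>c. {v \<in> space M. Sa (Suc t) v / Sa t v \<ge> 1 / c}"])
    show "AE w in M. w \<in> {v \<in> space M. Sa (Suc t) v / Sa t v \<ge> 1 / c} \<longrightarrow> Sa t w / Sa (Suc t) w \<le> c"
      if "0 < c" for c
      using one_period_bounds by eventually_elim (use that in \<open>auto simp: field_simps\<close>)
    show "AE w in M. 0 < fst (\<zeta> w) \<longrightarrow>
        0 \<le> Sa t w * snd (\<zeta> w) + Sa t w / Sa (Suc t) w * fst (\<zeta> w)"
      using one_period_bounds
    proof eventually_elim
      case (elim w)
      have "Sa t w * snd (\<zeta> w) + Sa t w / Sa (Suc t) w * fst (\<zeta> w)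
          = Sa t w / Sa (Suc t) w * (fst (\<zeta> w) + Sa (Suc t) w * snd (\<zeta> w))"
        using elim by (simp add: field_simps)
      also have "\<dots> \<ge> 0"
        using elim by (intro mult_nonneg_nonneg) auto
      finally show ?case
        by simp
    qed
  qed (use one_period_cond_exp_nonzero in auto)
  then show ?thesis
    using one_period_bounds by eventually_elim (simp add: zero_le_mult_iff)
qed

lemma nonneg_of_solvent_next: "AE w in M. 0 \<le> fst (\<zeta> w) \<and> 0 \<le> snd (\<zeta> w)"
  using cash_nonneg_if_long_stock stock_nonneg_if_long_cash one_period_bounds
proof eventually_elim
  case (elim w)
  let ?a = "fst (\<zeta> w)" and ?b = "snd (\<zeta> w)"
  have "\<not> ?b < 0"
  proof
    assume "?b < 0"
    then have "Sb (Suc t) w * ?b < 0"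
      using elim by (simp add: mult_pos_neg)
    then have "0 < ?a"
      using elim by linarith
    then show False
      using elim \<open>?b < 0\<close> by auto
  qed
  then show ?case
    using elim by (cases "?b = 0") auto
qed

end

lemma solvent_of_solvent_after_trades:
  assumes "t \<le> T" and "\<eta> \<in> borel_measurable (F t)"
    and "\<forall>u\<in>{t..T}. \<xi> u \<in> L0 M (F u) (\<lambda>w. uminus ` K u w)"
    and "AE w in M. \<eta> w + (\<Sum>u=t..T. \<xi> u w) \<in> K T w"
  shows "AE w in M. \<eta> w \<in> K t w"
  using assms
proof (induction t arbitrary: \<eta> rule: inc_induct)
  case base
  have "AE w in M. \<xi> T w \<in> uminus ` K T w"
    using base.prems(2) by (simp add: L0_def)
  with base.prems(3) show ?case
  proof eventually_elim
    case (elim w)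
    then have "\<eta> w + \<xi> T w \<in> K T w"
      by simp
    then show ?case
      using elim(2) by (rule solvency_cone_cancel)
  qed
next
  case (step t)
  have \<xi>_t: "\<xi> t \<in> borel_measurable (F t)" "AE w in M. \<xi> t w \<in> uminus ` K t w"
    using step.prems(2) step.hyps by (auto simp: L0_def)
  define \<eta>' where "\<eta>' w = \<eta> w + \<xi> t w" for w
  have \<eta>'_F_t: "\<eta>' \<in> borel_measurable (F t)"
    unfolding \<eta>'_def using step.prems(1) \<xi>_t(1) by measurable
  have "\<eta>' \<in> borel_measurable (F (Suc t))"
    using step.hyps by (intro F_measurable_mono[OF _ _ \<eta>'_F_t]) auto
  moreover have "\<forall>u\<in>{Suc t..T}. \<xi> u \<in> L0 M (F u) (\<lambda>w. uminus ` K u w)"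
    using step.prems(2) by auto
  moreover have "(\<Sum>u=t..T. \<xi> u w) = \<xi> t w + (\<Sum>u=Suc t..T. \<xi> u w)" for w
    using step.hyps by (simp add: sum.atLeast_Suc_atMost)
  then have "AE w in M. \<eta>' w + (\<Sum>u=Suc t..T. \<xi> u w) \<in> K T w"
    using step.prems(3) by (simp add: \<eta>'_def add.assoc)
  ultimately have "AE w in M. \<eta>' w \<in> K (Suc t) w"
    by (rule step.IH)
  with step.hyps(2) have "AE w in M. 0 \<le> fst (\<eta>' w) \<and> 0 \<le> snd (\<eta>' w)"
    by (intro nonneg_of_solvent_next[OF _ \<eta>'_F_t]) auto
  then show ?case
    using \<xi>_t(2) S_pos[OF less_imp_le[OF step.hyps(2)]]
  proof eventually_elim
    case (elim w)
    then have "\<eta>' w \<in> K t w"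
      by (intro nonneg_in_solvency_cone) auto
    then have "\<eta> w + \<xi> t w \<in> K t w"
      by (simp add: \<eta>'_def)
    then show ?case
      using elim(2) by (rule solvency_cone_cancel)
  qed
qed

lemma NA2_holds: "NA2 M F Sb Sa T"
  unfolding NA2_def
proof (intro allI impI)
  fix t \<eta>
  assume t: "t \<le> T" and \<eta>: "\<eta> \<in> borel_measurable (F t)"
    and "\<exists>X\<in>A_set M F Sb Sa t T. (\<lambda>w. \<eta> w + X w) \<in> L0 M (F T) (K T)"
  then obtain X where X: "X \<in> A_set M F Sb Sa t T" and hedge: "(\<lambda>w. \<eta> w + X w) \<in> L0 M (F T) (K T)"
    by blast
  from X obtain \<xi> where \<xi>: "\<forall>u\<in>{t..T}. \<xi> u \<in> L0 M (F u) (\<lambda>w. uminus ` K u w)"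
    and X_eq: "X = (\<lambda>w. \<Sum>u=t..T. \<xi> u w)"
    unfolding A_set_def by blast
  have "AE w in M. \<eta> w + (\<Sum>u=t..T. \<xi> u w) \<in> K T w"
    using hedge by (simp add: L0_def X_eq)
  with t \<eta> \<xi> have "AE w in M. \<eta> w \<in> K t w"
    by (rule solvent_of_solvent_after_trades)
  then show "\<eta> \<in> L0 M (F t) (K t)"
    using \<eta> by (simp add: L0_def)
qed

end

theorem corollary9p4:
  fixes M :: "'a measure" and F :: "nat \<Rightarrow> 'a measure" and T :: nat
    and Sb Sa :: "nat \<Rightarrow> 'a \<Rightarrow> real"
  assumes prob: "prob_space M"
    and complete: "\<And>A B. B \<in> null_sets M \<Longrightarrow> A \<subseteq> B \<Longrightarrow> A \<in> sets M"
    and sub: "\<And>t. t \<le> T \<Longrightarrow> subalgebra M (F t)"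
    and filt: "\<And>s t. s \<le> t \<Longrightarrow> t \<le> T \<Longrightarrow> sets (F s) \<subseteq> sets (F t)"
    and F_null: "\<And>N. N \<in> null_sets M \<Longrightarrow> N \<in> sets (F 0)"
    and F0_trivial: "\<And>A. A \<in> sets (F 0) \<Longrightarrow> measure M A = 0 \<or> measure M A = 1"
    and Sb_meas: "\<And>t. t \<le> T \<Longrightarrow> Sb t \<in> borel_measurable (F t)"
    and Sa_meas: "\<And>t. t \<le> T \<Longrightarrow> Sa t \<in> borel_measurable (F t)"
    and S_pos: "\<And>t. t \<le> T \<Longrightarrow> AE w in M. 0 < Sb t w \<and> Sb t w \<le> Sa t w"
    and cond: "\<And>t c. 1 \<le> t \<Longrightarrow> t \<le> T \<Longrightarrow> 0 < c \<Longrightarrow>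
      AE w in M.
        real_cond_exp M (F (t - 1)) (indicator {v \<in> space M. Sb t v / Sb (t - 1) v \<le> c}) w
      * real_cond_exp M (F (t - 1)) (indicator {v \<in> space M. Sa t v / Sa (t - 1) v \<ge> c}) w > 0"
  shows "NA2 M F Sb Sa T"
proof -
  have "bid_ask_model M F T Sb Sa"
    using prob sub filt Sb_meas Sa_meas S_pos cond
    by (simp add: bid_ask_model_def bid_ask_model_axioms_def)
  then show ?thesis
    by (rule bid_ask_model.NA2_holds)
qed

end
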